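(* Let $n\ge1$, $\gamma>1$, $\rho\in(0,1/n)$, $\theta>1$, $t\in[0,n]$, $\vartheta\in(0,1)$, and let $h:[0,1]\to[1,\infty)$ be differentiable, increasing and concave with $h(0)=1$, $h(1)=\bar h>1$; assume $n\frac{\gamma-1}{\gamma}<1$, $\bar h^{1/\gamma}>\frac1{1-n\rho}$ and $\frac{h'(x)}{\gamma h(x)}>\frac{n\rho}{1-n\rho x}$ for all $x\in[0,1]$. Let $\tau_1=\frac{h'(0)}{\gamma}-\rho$ and $\tau_2=\big[1+\big(\frac{h'(1)}{\gamma\bar h}-\frac{\rho}{1-n\rho}\big)^{-1}\big]^{-1}$, and in the region $\tau_2(1-\vartheta)<\theta\frac tn<\tau_1(1-\vartheta)$ let $\hat x\in(0,1)$ be the solution of $$\Big(\frac{h'(x)}{\gamma h(x)}-\frac{\rho}{1-n\rho x}\Big)\Big(1-\vartheta-\theta\frac{t}{n}x\Big)=\theta\frac{t}{n}.$$ Then (1) $\hat x$ is decreasing in $\vartheta$, $\theta$, $t$ and $\rho$; (2) for every $n\ge3$, $\hat x$ is increasing in $n$.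
   Context: $\hat x$ is the symmetric interior equilibrium amount of adulterant chosen by sellers on an e-commerce platform under preemptive economically motivated adulteration; $\vartheta$ is the platform's take rate, $\theta$ the penalty intensity, $t$ the number of randomly inspected sellers out of $n$ sellers, $\rho$ consumers' quality consciousness, $\gamma$ price sensitivity, $h$ the quality improvement from adulteration. *)

theory Defs
  imports "HOL-Analysis.Analysis"
begin

text \<open>Thresholds tau_1 and tau_2 of the paper (dh stands for the derivative h').\<close>
definition tau1 :: "(real \<Rightarrow> real) \<Rightarrow> real \<Rightarrow> real \<Rightarrow> real" where
  "tau1 dh \<gamma> \<rho> = dh 0 / \<gamma> - \<rho>"

definition tau2 :: "(real \<Rightarrow> real) \<Rightarrow> (real \<Rightarrow> real) \<Rightarrow> real \<Rightarrow> real \<Rightarrow> nat \<Rightarrow> real" where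
  "tau2 h dh \<gamma> \<rho> n =
     inverse (1 + inverse (dh 1 / (\<gamma> * h 1) - \<rho> / (1 - real n * \<rho>)))"

definition std_assms ::
  "(real \<Rightarrow> real) \<Rightarrow> (real \<Rightarrow> real) \<Rightarrow> real \<Rightarrow> real \<Rightarrow> real \<Rightarrow> real \<Rightarrow> real \<Rightarrow> nat \<Rightarrow> bool" where
  "std_assms h dh \<gamma> \<rho> \<theta> t vt n \<longleftrightarrow>
     n \<ge> 1 \<and> \<gamma> > 1 \<and> 0 < \<rho> \<and> \<rho> < 1 / real n \<and> \<theta> > 1 \<and>
     0 \<le> t \<and> t \<le> real n \<and> 0 < vt \<and> vt < 1 \<and>
     (\<forall>x\<in>{0..1}. (h has_real_derivative dh x) (at x within {0..1})) \<and>
     mono_on {0..1} h \<and> concave_on {0..1} h \<and> (\<forall>x\<in>{0..1}. 1 \<le> h x) \<and>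
     h 0 = 1 \<and> h 1 > 1 \<and>
     real n * ((\<gamma> - 1) / \<gamma>) < 1 \<and>
     h 1 powr (1 / \<gamma>) > 1 / (1 - real n * \<rho>) \<and>
     (\<forall>x\<in>{0..1}. dh x / (\<gamma> * h x) > real n * \<rho> / (1 - real n * \<rho> * x)) \<and>
     tau2 h dh \<gamma> \<rho> n * (1 - vt) < \<theta> * (t / real n) \<and>
     \<theta> * (t / real n) < tau1 dh \<gamma> \<rho> * (1 - vt)"

definition is_xhat ::
  "(real \<Rightarrow> real) \<Rightarrow> (real \<Rightarrow> real) \<Rightarrow> real \<Rightarrow> real \<Rightarrow> real \<Rightarrow> real \<Rightarrow> real \<Rightarrow> nat \<Rightarrow> real \<Rightarrow> bool" where
  "is_xhat h dh \<gamma> \<rho> \<theta> t vt n x \<longleftrightarrow>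
     0 < x \<and> x < 1 \<and>
     (dh x / (\<gamma> * h x) - \<rho> / (1 - real n * \<rho> * x)) * (1 - vt - \<theta> * (t / real n) * x)
       = \<theta> * (t / real n)"

end

theory Submission
  imports Defs
begin

text \<open>Since the first factor of the equilibrium equation is positive, the equation says
  \<open>1 / A(x) + x = (1 - \<vartheta>) / (\<theta> t / n)\<close>, where \<open>A(x) = h'(x) / (\<gamma> h(x)) - \<rho> / (1 - n \<rho> x)\<close>.
  As \<open>h\<close> is increasing and concave, \<open>A\<close> is decreasing, so the left-hand side is strictly
  increasing in \<open>x\<close> and \<open>x\<close>-hat is the preimage of the right-hand side.
  Raising \<open>\<vartheta>\<close>, \<open>\<theta>\<close> or \<open>t\<close> lowers the right-hand side and raising \<open>\<rho>\<close> raises the left-hand side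
  pointwise; either way \<open>x\<close>-hat decreases. For \<open>n\<close>, the right-hand side is \<open>n (1 - \<vartheta>) / (\<theta> t)\<close>,
  while for \<open>n \<ge> 3\<close> the left-hand side divided by \<open>n\<close> is strictly decreasing in \<open>n\<close>
  (a derivative computation), so \<open>x\<close>-hat increases.\<close>

lemma concave_on_deriv_antimono:
  fixes f :: "real \<Rightarrow> real"
  assumes "concave_on A f" "connected A" "x \<in> interior A" "y \<in> interior A" "x \<le> y"
    and "(f has_real_derivative f' x) (at x within A)" "(f has_real_derivative f' y) (at y within A)"
  shows "f' y \<le> f' x"
proof (cases "x = y")
  case False
  have convex: "convex_on A (\<lambda>z. - f z)"
    using assms(1) by (simp add: concave_on_def)
  have "- f y - - f x \<ge> - f' x * (y - x)"
    using assms interior_subset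
    by (intro convex_on_imp_above_tangent[OF convex]) (auto intro: DERIV_minus)
  moreover have "- f x - - f y \<ge> - f' y * (x - y)"
    using assms interior_subset
    by (intro convex_on_imp_above_tangent[OF convex]) (auto intro: DERIV_minus)
  ultimately have "f' y * (y - x) \<le> f' x * (y - x)"
    by (simp add: algebra_simps)
  with False \<open>x \<le> y\<close> show ?thesis
    by simp
qed simp

definition margin :: "(real \<Rightarrow> real) \<Rightarrow> (real \<Rightarrow> real) \<Rightarrow> real \<Rightarrow> real \<Rightarrow> real \<Rightarrow> real \<Rightarrow> real" where
  "margin h dh \<gamma> \<rho> m x = dh x / (\<gamma> * h x) - \<rho> / (1 - m * \<rho> * x)"

definition equilibrium_level ::
  "(real \<Rightarrow> real) \<Rightarrow> (real \<Rightarrow> real) \<Rightarrow> real \<Rightarrow> real \<Rightarrow> real \<Rightarrow> real \<Rightarrow> real" where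
  "equilibrium_level h dh \<gamma> \<rho> m x = 1 / margin h dh \<gamma> \<rho> m x + x"

lemma margin_strict_antimono_rho:
  assumes "0 < \<rho>1" "\<rho>1 < \<rho>2" "0 \<le> m * x" "0 < 1 - m * \<rho>2 * x"
  shows "margin h dh \<gamma> \<rho>2 m x < margin h dh \<gamma> \<rho>1 m x"
proof -
  have "\<rho>1 * (m * x) \<le> \<rho>2 * (m * x)"
    using assms by (intro mult_right_mono) auto
  then have "m * \<rho>1 * x \<le> m * \<rho>2 * x"
    by (simp add: mult_ac)
  then have "\<rho>1 / (1 - m * \<rho>1 * x) \<le> \<rho>1 / (1 - m * \<rho>2 * x)"
    using assms by (intro divide_left_mono) auto
  also have "\<dots> < \<rho>2 / (1 - m * \<rho>2 * x)"
    using assms by (intro divide_strict_right_mono)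
  finally show ?thesis
    unfolding margin_def by linarith
qed

lemma std_assms_denominator_pos:
  assumes "std_assms h dh \<gamma> \<rho> \<theta> t vt n" "0 \<le> x" "x \<le> 1"
  shows "0 < 1 - real n * \<rho> * x"
proof -
  have "real n * \<rho> * x \<le> real n * \<rho>"
    using assms unfolding std_assms_def by (simp add: mult_left_le)
  moreover have "real n * \<rho> < 1"
    using assms unfolding std_assms_def by (auto simp: field_simps)
  ultimately show ?thesis
    by linarith
qed

lemma std_assms_margin_pos:
  assumes S: "std_assms h dh \<gamma> \<rho> \<theta> t vt n" and "0 \<le> x" "x \<le> 1"
  shows "0 < margin h dh \<gamma> \<rho> (real n) x"
proof -
  have B: "0 < 1 - real n * \<rho> * x"
    using std_assms_denominator_pos assms by blast
  have "\<rho> / (1 - real n * \<rho> * x) \<le> real n * \<rho> / (1 - real n * \<rho> * x)"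
    using S B unfolding std_assms_def by (intro divide_right_mono) auto
  moreover have "real n * \<rho> / (1 - real n * \<rho> * x) < dh x / (\<gamma> * h x)"
    using assms unfolding std_assms_def by auto
  ultimately show ?thesis
    unfolding margin_def by linarith
qed

lemma std_assms_deriv_pos:
  assumes S: "std_assms h dh \<gamma> \<rho> \<theta> t vt n" and "0 \<le> x" "x \<le> 1"
  shows "0 < dh x"
proof -
  have "0 < real n * \<rho> / (1 - real n * \<rho> * x)"
    using S std_assms_denominator_pos[OF assms] unfolding std_assms_def by simp
  also have "\<dots> < dh x / (\<gamma> * h x)"
    using assms unfolding std_assms_def by auto
  finally have "0 < dh x / (\<gamma> * h x)" .
  moreover have "0 < \<gamma> * h x"
    using assms unfolding std_assms_def by (intro mult_pos_pos) force+
  ultimately show ?thesis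
    by (simp add: zero_less_divide_iff)
qed

text \<open>This is the only use made of the window \<open>\<tau>\<^sub>2 (1 - \<vartheta>) < \<theta> t / n < \<tau>\<^sub>1 (1 - \<vartheta>)\<close>:
  it rules out \<open>t = 0\<close>.\<close>

lemma std_assms_penalty_pos:
  assumes S: "std_assms h dh \<gamma> \<rho> \<theta> t vt n"
  shows "0 < \<theta> * (t / real n)"
proof -
  have "0 < tau2 h dh \<gamma> \<rho> n"
    using std_assms_margin_pos[OF S, of 1]
    unfolding tau2_def margin_def by (simp add: add_pos_pos)
  then have "0 < tau2 h dh \<gamma> \<rho> n * (1 - vt)"
    using S unfolding std_assms_def by simp
  with S show ?thesis
    unfolding std_assms_def by linarith
qed

lemma std_assms_margin_antimono:
  assumes S: "std_assms h dh \<gamma> \<rho> \<theta> t vt n" and xy: "0 < x" "x \<le> y" "y < 1"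
  shows "margin h dh \<gamma> \<rho> (real n) y \<le> margin h dh \<gamma> \<rho> (real n) x"
proof -
  have concave: "concave_on {0..1} h" and mono: "mono_on {0..1} h"
    and deriv: "\<forall>z\<in>{0..1}. (h has_real_derivative dh z) (at z within {0..1})"
    and "1 \<le> h x" "1 < \<gamma>" "0 < \<rho>"
    using S xy unfolding std_assms_def by auto
  have "dh y \<le> dh x"
    using xy deriv by (intro concave_on_deriv_antimono[OF concave, where f' = dh]) auto
  moreover have "\<gamma> * h x \<le> \<gamma> * h y"
    using xy \<open>1 < \<gamma>\<close> mono_onD[OF mono, of x y] by simp
  moreover have "0 < dh y"
    using std_assms_deriv_pos[OF S] xy by simp
  ultimately have "dh y / (\<gamma> * h y) \<le> dh x / (\<gamma> * h x)"
    using \<open>1 \<le> h x\<close> \<open>1 < \<gamma>\<close> by (intro frac_le) auto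
  moreover have "\<rho> / (1 - real n * \<rho> * x) \<le> \<rho> / (1 - real n * \<rho> * y)"
  proof -
    have "real n * \<rho> * x \<le> real n * \<rho> * y"
      using xy \<open>0 < \<rho>\<close> by (intro mult_left_mono) auto
    moreover have "0 < 1 - real n * \<rho> * x" "0 < 1 - real n * \<rho> * y"
      using std_assms_denominator_pos[OF S] xy by auto
    ultimately show ?thesis
      using \<open>0 < \<rho>\<close> by (intro divide_left_mono) auto
  qed
  ultimately show ?thesis
    unfolding margin_def by linarith
qed

lemma std_assms_equilibrium_level_strict_mono:
  assumes S: "std_assms h dh \<gamma> \<rho> \<theta> t vt n"
  shows "strict_mono_on {0<..<1} (equilibrium_level h dh \<gamma> \<rho> (real n))"
proof (rule strict_mono_onI)
  fix x y :: real
  assume "x \<in> {0<..<1}" "y \<in> {0<..<1}" "x < y"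
  then have "margin h dh \<gamma> \<rho> (real n) y \<le> margin h dh \<gamma> \<rho> (real n) x"
    and "0 < margin h dh \<gamma> \<rho> (real n) y"
    using std_assms_margin_antimono[OF S] std_assms_margin_pos[OF S] by auto
  then have "1 / margin h dh \<gamma> \<rho> (real n) x \<le> 1 / margin h dh \<gamma> \<rho> (real n) y"
    by (simp add: frac_le)
  with \<open>x < y\<close> show "equilibrium_level h dh \<gamma> \<rho> (real n) x < equilibrium_level h dh \<gamma> \<rho> (real n) y"
    unfolding equilibrium_level_def by linarith
qed

lemma is_xhat_imp_equilibrium_level:
  assumes S: "std_assms h dh \<gamma> \<rho> \<theta> t vt n" and X: "is_xhat h dh \<gamma> \<rho> \<theta> t vt n x"
  shows "x \<in> {0<..<1}"
    and "equilibrium_level h dh \<gamma> \<rho> (real n) x = (1 - vt) / (\<theta> * (t / real n))"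
proof -
  show x: "x \<in> {0<..<1}"
    using X unfolding is_xhat_def by auto
  define A where "A = margin h dh \<gamma> \<rho> (real n) x"
  define s where "s = \<theta> * (t / real n)"
  have "A > 0" "s > 0"
    using x std_assms_margin_pos[OF S] std_assms_penalty_pos[OF S] by (auto simp: A_def s_def)
  moreover have "A * (1 - vt - s * x) = s"
    using X unfolding is_xhat_def A_def s_def margin_def by simp
  ultimately show "equilibrium_level h dh \<gamma> \<rho> (real n) x = (1 - vt) / s"
    unfolding equilibrium_level_def A_def[symmetric] by (simp add: field_simps)
qed

lemma scaled_level_has_negative_deriv:
  fixes G \<rho> x m :: real
  assumes "0 < \<rho>" "0 < x" "3 \<le> m" "0 < 1 - m * \<rho> * x" "m * \<rho> / (1 - m * \<rho> * x) < G"
  shows "\<exists>E. ((\<lambda>m. (1 / (G - \<rho> / (1 - m * \<rho> * x)) + x) / m) has_real_derivative E) (at m) \<and> E < 0"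
proof -
  define B where "B = (\<lambda>m. 1 - m * \<rho> * x)"
  define D where "D = (\<lambda>m. G - \<rho> / B m)"
  have B_pos: "0 < B m"
    using assms by (simp add: B_def)
  have BD: "(m - 1) * \<rho> < B m * D m"
  proof -
    have "m * \<rho> < G * B m"
      using assms B_pos by (simp add: B_def pos_divide_less_eq)
    then show ?thesis
      using B_pos by (simp add: D_def algebra_simps)
  qed
  have "0 < (m - 1) * \<rho>"
    using assms by simp
  with BD B_pos have D_pos: "0 < D m"
    by (meson less_trans zero_less_mult_pos)
  have dB: "(B has_real_derivative - (\<rho> * x)) (at m)"
    unfolding B_def by (auto intro!: derivative_eq_intros)
  have dD: "(D has_real_derivative - (\<rho>\<^sup>2 * x) / (B m)\<^sup>2) (at m)"
    unfolding D_def using B_pos by (auto intro!: derivative_eq_intros dB simp: power2_eq_square)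
  define E where "E = \<rho>\<^sup>2 * x / ((B m)\<^sup>2 * (D m)\<^sup>2) / m - (1 / D m + x) / m\<^sup>2"
  have "((\<lambda>m. (1 / D m + x) / m) has_real_derivative E) (at m)"
    using B_pos D_pos assms unfolding E_def
    by (auto intro!: derivative_eq_intros dD simp: field_simps power2_eq_square)
  then have deriv: "((\<lambda>m. (1 / (G - \<rho> / (1 - m * \<rho> * x)) + x) / m) has_real_derivative E) (at m)"
    unfolding D_def B_def .
  \<comment> \<open>Here \<open>n \<ge> 3\<close> enters: for \<open>m \<ge> 1\<close>, \<open>m \<le> (m - 1)\<^sup>2\<close> holds iff \<open>m \<ge> (3 + sqrt 5) / 2\<close>.\<close>
  have "m * \<rho>\<^sup>2 * x \<le> ((m - 1) * \<rho>)\<^sup>2 * x"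
  proof -
    have "(m - 1)\<^sup>2 = m + (m * (m - 3) + 1)"
      by (simp add: power2_eq_square algebra_simps)
    moreover have "0 \<le> m * (m - 3)"
      using assms by simp
    ultimately have "m \<le> (m - 1)\<^sup>2"
      by linarith
    then show ?thesis
      using assms by (simp add: power_mult_distrib mult_right_mono)
  qed
  also have "\<dots> < (B m * D m)\<^sup>2 * x"
    using BD assms by (intro mult_strict_right_mono power_strict_mono) auto
  also have "\<dots> \<le> (B m)\<^sup>2 * D m * (1 + x * D m)"
    using B_pos D_pos by (simp add: power2_eq_square algebra_simps)
  finally have numerator_neg: "m * \<rho>\<^sup>2 * x - (B m)\<^sup>2 * D m * (1 + x * D m) < 0"
    by simp
  have "E = (m * \<rho>\<^sup>2 * x - (B m)\<^sup>2 * D m * (1 + x * D m)) / (m\<^sup>2 * (B m)\<^sup>2 * (D m)\<^sup>2)"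
    using B_pos D_pos assms unfolding E_def by (simp add: field_simps power2_eq_square)
  then have "E < 0"
    using numerator_neg B_pos D_pos assms by (simp add: divide_neg_pos)
  with deriv show ?thesis
    by blast
qed

lemma scaled_level_strict_antimono:
  fixes G \<rho> x m1 m2 :: real
  assumes "0 < \<rho>" "0 < x" "3 \<le> m1" "m1 < m2"
    and "0 < 1 - m2 * \<rho> * x" "m2 * \<rho> / (1 - m2 * \<rho> * x) < G"
  shows "(1 / (G - \<rho> / (1 - m2 * \<rho> * x)) + x) / m2 < (1 / (G - \<rho> / (1 - m1 * \<rho> * x)) + x) / m1"
proof (rule DERIV_neg_imp_decreasing[OF \<open>m1 < m2\<close>])
  fix m
  assume m: "m1 \<le> m" "m \<le> m2"
  have "m * \<rho> * x \<le> m2 * \<rho> * x"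
    using m assms by (intro mult_right_mono) auto
  then have denominators: "1 - m2 * \<rho> * x \<le> 1 - m * \<rho> * x" "0 < 1 - m * \<rho> * x"
    using assms by linarith+
  moreover have "m * \<rho> \<le> m2 * \<rho>"
    using m assms by (intro mult_right_mono) auto
  ultimately have "m * \<rho> / (1 - m * \<rho> * x) \<le> m2 * \<rho> / (1 - m2 * \<rho> * x)"
    using m assms by (intro frac_le) auto
  then show "\<exists>E. ((\<lambda>m. (1 / (G - \<rho> / (1 - m * \<rho> * x)) + x) / m) has_real_derivative E) (at m) \<and> E < 0"
    using m assms denominators by (intro scaled_level_has_negative_deriv) auto
qed

lemma xhat_less_if_target_less:
  assumes S1: "std_assms h dh \<gamma> \<rho> \<theta>1 t1 vt1 n" and S2: "std_assms h dh \<gamma> \<rho> \<theta>2 t2 vt2 n"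
    and X1: "is_xhat h dh \<gamma> \<rho> \<theta>1 t1 vt1 n x1" and X2: "is_xhat h dh \<gamma> \<rho> \<theta>2 t2 vt2 n x2"
    and "(1 - vt2) / (\<theta>2 * (t2 / real n)) < (1 - vt1) / (\<theta>1 * (t1 / real n))"
  shows "x2 < x1"
proof -
  have "equilibrium_level h dh \<gamma> \<rho> (real n) x2 < equilibrium_level h dh \<gamma> \<rho> (real n) x1"
    using assms(5) is_xhat_imp_equilibrium_level(2)[OF S1 X1] is_xhat_imp_equilibrium_level(2)[OF S2 X2]
    by simp
  then show ?thesis
    using strict_mono_on_less[OF std_assms_equilibrium_level_strict_mono[OF S1]
        is_xhat_imp_equilibrium_level(1)[OF S2 X2] is_xhat_imp_equilibrium_level(1)[OF S1 X1]]
    by simp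
qed

lemma xhat_strict_antimono_vt:
  assumes S1: "std_assms h dh \<gamma> \<rho> \<theta> t vt1 n" and S2: "std_assms h dh \<gamma> \<rho> \<theta> t vt2 n"
    and X1: "is_xhat h dh \<gamma> \<rho> \<theta> t vt1 n x1" and X2: "is_xhat h dh \<gamma> \<rho> \<theta> t vt2 n x2"
    and "vt1 < vt2"
  shows "x2 < x1"
  using std_assms_penalty_pos[OF S1] \<open>vt1 < vt2\<close>
  by (intro xhat_less_if_target_less[OF S1 S2 X1 X2] divide_strict_right_mono) auto

lemma xhat_strict_antimono_theta:
  assumes S1: "std_assms h dh \<gamma> \<rho> \<theta>1 t vt n" and S2: "std_assms h dh \<gamma> \<rho> \<theta>2 t vt n"
    and X1: "is_xhat h dh \<gamma> \<rho> \<theta>1 t vt n x1" and X2: "is_xhat h dh \<gamma> \<rho> \<theta>2 t vt n x2"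
    and "\<theta>1 < \<theta>2"
  shows "x2 < x1"
proof (rule xhat_less_if_target_less[OF S1 S2 X1 X2])
  have penalty: "0 < \<theta>1 * (t / real n)" and "0 < \<theta>1" "vt < 1"
    using std_assms_penalty_pos[OF S1] S1 unfolding std_assms_def by auto
  then have "0 < t / real n"
    using zero_less_mult_pos by blast
  then show "(1 - vt) / (\<theta>2 * (t / real n)) < (1 - vt) / (\<theta>1 * (t / real n))"
    using \<open>\<theta>1 < \<theta>2\<close> \<open>vt < 1\<close>
    by (intro divide_strict_left_mono mult_strict_right_mono
        mult_pos_pos[OF std_assms_penalty_pos[OF S2] penalty]) auto
qed

lemma xhat_strict_antimono_t:
  assumes S1: "std_assms h dh \<gamma> \<rho> \<theta> t1 vt n" and S2: "std_assms h dh \<gamma> \<rho> \<theta> t2 vt n"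
    and X1: "is_xhat h dh \<gamma> \<rho> \<theta> t1 vt n x1" and X2: "is_xhat h dh \<gamma> \<rho> \<theta> t2 vt n x2"
    and "t1 < t2"
  shows "x2 < x1"
proof (rule xhat_less_if_target_less[OF S1 S2 X1 X2])
  have "0 < \<theta>" "0 < real n" "vt < 1"
    using S1 unfolding std_assms_def by auto
  then have "\<theta> * (t1 / real n) < \<theta> * (t2 / real n)"
    using \<open>t1 < t2\<close> by (simp add: divide_strict_right_mono)
  then show "(1 - vt) / (\<theta> * (t2 / real n)) < (1 - vt) / (\<theta> * (t1 / real n))"
    using \<open>vt < 1\<close>
    by (intro divide_strict_left_mono
        mult_pos_pos[OF std_assms_penalty_pos[OF S2] std_assms_penalty_pos[OF S1]]) auto
qed

lemma xhat_strict_antimono_rho: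
  assumes S1: "std_assms h dh \<gamma> \<rho>1 \<theta> t vt n" and S2: "std_assms h dh \<gamma> \<rho>2 \<theta> t vt n"
    and X1: "is_xhat h dh \<gamma> \<rho>1 \<theta> t vt n x1" and X2: "is_xhat h dh \<gamma> \<rho>2 \<theta> t vt n x2"
    and "\<rho>1 < \<rho>2"
  shows "x2 < x1"
proof -
  have x2: "x2 \<in> {0<..<1}"
    using is_xhat_imp_equilibrium_level(1)[OF S2 X2] .
  have "margin h dh \<gamma> \<rho>2 (real n) x2 < margin h dh \<gamma> \<rho>1 (real n) x2"
    using S1 \<open>\<rho>1 < \<rho>2\<close> x2 std_assms_denominator_pos[OF S2, of x2] unfolding std_assms_def
    by (intro margin_strict_antimono_rho) auto
  then have "equilibrium_level h dh \<gamma> \<rho>1 (real n) x2 < equilibrium_level h dh \<gamma> \<rho>2 (real n) x2"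
    using std_assms_margin_pos[OF S2, of x2] x2
    unfolding equilibrium_level_def by (simp add: frac_less2)
  also have "\<dots> = equilibrium_level h dh \<gamma> \<rho>1 (real n) x1"
    using is_xhat_imp_equilibrium_level(2)[OF S1 X1] is_xhat_imp_equilibrium_level(2)[OF S2 X2]
    by simp
  finally show ?thesis
    using strict_mono_on_less[OF std_assms_equilibrium_level_strict_mono[OF S1]] x2
      is_xhat_imp_equilibrium_level(1)[OF S1 X1]
    by auto
qed

lemma xhat_strict_mono_n:
  assumes S1: "std_assms h dh \<gamma> \<rho> \<theta> t vt n1" and S2: "std_assms h dh \<gamma> \<rho> \<theta> t vt n2"
    and X1: "is_xhat h dh \<gamma> \<rho> \<theta> t vt n1 x1" and X2: "is_xhat h dh \<gamma> \<rho> \<theta> t vt n2 x2"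
    and "3 \<le> n1" "n1 < n2"
  shows "x1 < x2"
proof -
  define c where "c = (1 - vt) / (\<theta> * t)"
  have x1: "x1 \<in> {0<..<1}"
    using is_xhat_imp_equilibrium_level(1)[OF S1 X1] .
  have n_pos: "0 < real n1" "0 < real n2"
    using S1 S2 unfolding std_assms_def by auto
  have level1: "equilibrium_level h dh \<gamma> \<rho> (real n1) x1 = real n1 * c"
    using is_xhat_imp_equilibrium_level(2)[OF S1 X1] n_pos unfolding c_def by simp
  have level2: "equilibrium_level h dh \<gamma> \<rho> (real n2) x2 = real n2 * c"
    using is_xhat_imp_equilibrium_level(2)[OF S2 X2] n_pos unfolding c_def by simp
  have "equilibrium_level h dh \<gamma> \<rho> (real n2) x1 / real n2
      < equilibrium_level h dh \<gamma> \<rho> (real n1) x1 / real n1"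
    using S2 x1 \<open>3 \<le> n1\<close> \<open>n1 < n2\<close> std_assms_denominator_pos[OF S2, of x1]
    unfolding equilibrium_level_def margin_def std_assms_def
    by (intro scaled_level_strict_antimono) auto
  then have "equilibrium_level h dh \<gamma> \<rho> (real n2) x1 < equilibrium_level h dh \<gamma> \<rho> (real n2) x2"
    using level1 level2 n_pos by (simp add: divide_less_eq mult.commute)
  then show ?thesis
    using strict_mono_on_less[OF std_assms_equilibrium_level_strict_mono[OF S2]] x1
      is_xhat_imp_equilibrium_level(1)[OF S2 X2]
    by auto
qed

theorem proposition2:
  fixes h dh :: "real \<Rightarrow> real" and \<gamma> :: real
  shows
  "(\<forall>\<rho> \<theta> t vt1 vt2 n x1 x2.
      std_assms h dh \<gamma> \<rho> \<theta> t vt1 n \<and> std_assms h dh \<gamma> \<rho> \<theta> t vt2 n \<and>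
      is_xhat h dh \<gamma> \<rho> \<theta> t vt1 n x1 \<and> is_xhat h dh \<gamma> \<rho> \<theta> t vt2 n x2 \<and>
      vt1 < vt2 \<longrightarrow> x2 < x1) \<and>
   (\<forall>\<rho> \<theta>1 \<theta>2 t vt n x1 x2.
      std_assms h dh \<gamma> \<rho> \<theta>1 t vt n \<and> std_assms h dh \<gamma> \<rho> \<theta>2 t vt n \<and>
      is_xhat h dh \<gamma> \<rho> \<theta>1 t vt n x1 \<and> is_xhat h dh \<gamma> \<rho> \<theta>2 t vt n x2 \<and>
      \<theta>1 < \<theta>2 \<longrightarrow> x2 < x1) \<and>
   (\<forall>\<rho> \<theta> t1 t2 vt n x1 x2.
      std_assms h dh \<gamma> \<rho> \<theta> t1 vt n \<and> std_assms h dh \<gamma> \<rho> \<theta> t2 vt n \<and>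
      is_xhat h dh \<gamma> \<rho> \<theta> t1 vt n x1 \<and> is_xhat h dh \<gamma> \<rho> \<theta> t2 vt n x2 \<and>
      t1 < t2 \<longrightarrow> x2 < x1) \<and>
   (\<forall>\<rho>1 \<rho>2 \<theta> t vt n x1 x2.
      std_assms h dh \<gamma> \<rho>1 \<theta> t vt n \<and> std_assms h dh \<gamma> \<rho>2 \<theta> t vt n \<and>
      is_xhat h dh \<gamma> \<rho>1 \<theta> t vt n x1 \<and> is_xhat h dh \<gamma> \<rho>2 \<theta> t vt n x2 \<and>
      \<rho>1 < \<rho>2 \<longrightarrow> x2 < x1) \<and>
   (\<forall>\<rho> \<theta> t vt n1 n2 x1 x2.
      std_assms h dh \<gamma> \<rho> \<theta> t vt n1 \<and> std_assms h dh \<gamma> \<rho> \<theta> t vt n2 \<and>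
      is_xhat h dh \<gamma> \<rho> \<theta> t vt n1 x1 \<and> is_xhat h dh \<gamma> \<rho> \<theta> t vt n2 x2 \<and>
      3 \<le> n1 \<and> n1 < n2 \<longrightarrow> x1 < x2)"
  by (intro conjI allI impI; elim conjE)
    (fact xhat_strict_antimono_vt xhat_strict_antimono_theta xhat_strict_antimono_t
      xhat_strict_antimono_rho xhat_strict_mono_n)+

end
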